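(* Let $X$ be a unital prime Banach algebra containing a nontrivial idempotent element. Let $h:X\to X$ be an odd mapping and $\phi,\psi:X^2\to[0,\infty)$ satisfy $$\|h(xyx)-h(x)yx-xh(y)x-xyh(x)\|\le\psi(x,y),$$ $$\|h(x+my)+h(x-my)-2h(x)+2m^2h(y)-m^2h(2y)\|\le\phi(x,y)$$ for all $x,y\in X$, for some fixed nonzero even integer $m$. Assume that for all $x,y\in X$ $$\Phi(x):=\sum_{k=0}^{\infty}2^{-k}\phi(0,2^kx)<\infty,\qquad \liminf_{k\to\infty}2^{-3k}\psi(2^kx,2^ky)=0,\qquad \liminf_{k\to\infty}2^{-2k}\psi(2^kx,y)=0.$$ Then $h$ is a derivation.
   Context: An algebra $X$ is prime if it is nontrivial and for any $a,b\in X$, $arb=0$ for all $r\in X$ implies $a=0$ or $b=0$. A nontrivial idempotent is an element $e$ with $e^2=e$, $e\neq0$, $e\neq\mathbf{1}$. A derivation is an additive map $D:X\to X$ with $D(xy)=D(x)y+xD(y)$ for all $x,y\in X$. *)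

theory Defs
  imports "HOL-Analysis.Analysis"
begin

definition prime_algebra :: "'a::ring_1 itself \<Rightarrow> bool" where
  "prime_algebra _ \<longleftrightarrow> (0::'a) \<noteq> 1 \<and>
     (\<forall>a b::'a. (\<forall>r. a * r * b = 0) \<longrightarrow> a = 0 \<or> b = 0)"

definition nontrivial_idempotent :: "'a::ring_1 \<Rightarrow> bool" where
  "nontrivial_idempotent e \<longleftrightarrow> e * e = e \<and> e \<noteq> 0 \<and> e \<noteq> 1"

definition derivation :: "('a::ring \<Rightarrow> 'a) \<Rightarrow> bool" where
  "derivation D \<longleftrightarrow> (\<forall>x y. D (x + y) = D x + D y) \<and>
     (\<forall>x y. D (x * y) = D x * y + x * D y)"

end

theory Submission
  imports Defs
begin

text \<open>Putting \<open>x = 0\<close> in the second inequality and using oddness gives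
  \<open>\<parallel>h(2y) - 2h(y)\<parallel> \<le> \<phi>(0,y)\<close>, so by the summability of \<open>\<Phi>\<close> the Hyers sequence
  \<open>2\<^sup>-\<^sup>n h(2\<^sup>n x)\<close> converges to some \<open>L x\<close>. Rescaling the first inequality by \<open>2\<^sup>k\<close> in one or in
  both variables and passing to the limit along the subsequences \<open>2k\<close> and \<open>3k\<close>, the two liminf
  conditions give
  \<open>L(xyx) = L(x)yx + x h(y) x + xy L(x)\<close> and \<open>L(xyx) = L(x)yx + x L(y) x + xy L(x)\<close>;
  comparing them at \<open>x = 1\<close> yields \<open>h = L\<close>, so \<open>h\<close> is a Jordan triple derivation.

  It remains to show that a Jordan triple derivation \<open>D\<close> of a 2-torsion free prime ring with a
  nontrivial idempotent \<open>e\<close> is additive and a derivation; additivity is not assumed. Subtracting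
  an inner derivation achieves \<open>D e = 0\<close>, and then also \<open>D f = 0\<close> for \<open>f = 1 - e\<close>. Compressing
  the identity by elements such as \<open>e\<close>, \<open>f\<close> and \<open>e + e z f\<close> and using primeness, one shows that
  \<open>D\<close> maps each Peirce component \<open>e\<^sub>i R e\<^sub>j\<close> into itself, is additive on and across these
  components, and satisfies the Leibniz rule on products of components; the Peirce decomposition
  then gives the result for arbitrary elements.\<close>

definition jordan_triple_derivation :: "('a::ring \<Rightarrow> 'a) \<Rightarrow> bool" where
  "jordan_triple_derivation D \<longleftrightarrow> (\<forall>x y. D (x*y*x) = D x*y*x + x*D y*x + x*y*D x)"

lemma jordan_triple_derivationD:
  "jordan_triple_derivation D \<Longrightarrow> D (x*y*x) = D x*y*x + x*D y*x + x*y*D x"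
  unfolding jordan_triple_derivation_def by blast

lemma jordan_triple_derivation_add_inner:
  "jordan_triple_derivation D \<Longrightarrow> jordan_triple_derivation (\<lambda>x. D x + c*x - x*c)"
  unfolding jordan_triple_derivation_def by (simp add: algebra_simps)

context
  fixes D :: "'a::ring_1 \<Rightarrow> 'a"
  assumes jordan: "jordan_triple_derivation D"
begin

lemma jordan_zero: "D 0 = 0"
  using jordan_triple_derivationD[OF jordan, of 0 0] by simp

lemma jordan_one:
  assumes two_torsion_free: "\<And>z::'a. z + z = 0 \<Longrightarrow> z = 0"
  shows "D 1 = 0"
  using jordan_triple_derivationD[OF jordan, of 1 1] two_torsion_free[of "D 1"]
  by (simp add: algebra_simps)

lemma jordan_compress_defect:
  "p*(D (a + b) - D a - D b)*p = D (p*(a + b)*p) - D (p*a*p) - D (p*b*p)"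
  unfolding jordan_triple_derivationD[OF jordan] by (simp add: algebra_simps)

lemma jordan_compress_defect_eq_0:
  assumes "p*a*p = 0 \<or> p*b*p = 0"
  shows "p*(D (a + b) - D a - D b)*p = 0"
  using assms unfolding jordan_compress_defect by (auto simp: algebra_simps jordan_zero)

end

locale peirce =
  fixes e f :: "'a::ring_1"
  assumes idem_e: "e*e = e" and complement: "e + f = 1"
begin

lemma f_eq: "f = 1 - e"
  using complement by (simp add: algebra_simps)

lemma idem_f: "f*f = f" and orth_ef: "e*f = 0" and orth_fe: "f*e = 0"
  unfolding f_eq by (simp_all add: algebra_simps idem_e)

lemma idem_e': "e*(e*x) = e*x" and idem_f': "f*(f*x) = f*x"
  and orth_ef': "e*(f*x) = 0" and orth_fe': "f*(e*x) = 0"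
  by (simp_all add: mult.assoc[symmetric] idem_e idem_f orth_ef orth_fe)

lemmas peirce_simps = mult.assoc idem_e idem_f orth_ef orth_fe idem_e' idem_f' orth_ef' orth_fe'

lemma peirce_swap: "peirce f e"
  by unfold_locales (simp_all add: idem_f complement add.commute)

lemma peirce_decomp: "x = e*x*e + e*x*f + f*x*e + f*x*f"
proof -
  have "(e + f)*x*(e + f) = e*x*e + e*x*f + f*x*e + f*x*f" by (simp add: algebra_simps)
  thus ?thesis by (simp add: complement)
qed

lemma peirce_eq_0I: "e*t*e = 0 \<Longrightarrow> e*t*f = 0 \<Longrightarrow> f*t*e = 0 \<Longrightarrow> f*t*f = 0 \<Longrightarrow> t = 0"
  using peirce_decomp[of t] by simp

lemma jordan_idempotent_off_diagonal:
  assumes jordan: "jordan_triple_derivation D" and D_1: "D 1 = 0"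
  shows "D e = e*D e*f + f*D e*e"
proof -
  have D_e: "D e*e + e*D e = D e"
    using jordan_triple_derivationD[OF jordan, of e 1] by (simp add: D_1 idem_e)
  have "e*D e*e = e*(D e*e + e*D e)*e" "f*D e*f = f*(D e*e + e*D e)*f"
    by (simp_all only: D_e)
  then have "e*D e*e = 0" "f*D e*f = 0"
    by (simp_all add: algebra_simps peirce_simps)
  then show ?thesis using peirce_decomp[of "D e"] by simp
qed

text \<open>The symmetry \<open>u = e - f\<close> satisfies \<open>u*u = 1\<close>, \<open>u*e = e*u = e\<close> and \<open>u*f*u = f\<close>, so \<open>D u = 0\<close>
  and \<open>D f = u*D f*u\<close>; but conjugation by \<open>u\<close> negates the off-diagonal Peirce components,
  to which \<open>D f\<close> belongs.\<close>
lemma jordan_zero_at_complement: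
  assumes jordan: "jordan_triple_derivation D"
    and two_torsion_free: "\<And>z::'a. z + z = 0 \<Longrightarrow> z = 0"
    and D_e: "D e = 0"
  shows "D f = 0"
proof -
  note triple = jordan_triple_derivationD[OF jordan]
  have D_1: "D 1 = 0" using jordan_one[OF jordan two_torsion_free] .
  define u where "u = e - f"
  have D_u: "D u = 0"
  proof -
    have "u*u = 1" "e*u = e" "u*e = e"
      unfolding u_def by (simp_all add: algebra_simps peirce_simps complement)
    then have De_u: "D u*e + e*D u = 0" and Du_u: "D u*u + u*D u = 0"
      using triple[of u e] triple[of u 1] by (simp_all add: D_1 D_e mult.assoc)
    have "D u + D u = D u*(e + f) + (e + f)*D u" by (simp add: complement)
    also have "\<dots> = (D u*e + e*D u) + (D u*e + e*D u) - (D u*u + u*D u)"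
      unfolding u_def by (simp add: algebra_simps)
    finally have "D u + D u = 0" using De_u Du_u by simp
    then show ?thesis by (rule two_torsion_free)
  qed
  have "u*f*u = f" unfolding u_def by (simp add: algebra_simps peirce_simps)
  then have D_f_twisted: "u*D f*u = D f"
    using triple[of u f] by (simp add: D_u)
  have D_f: "D f = f*D f*e + e*D f*f"
    using peirce.jordan_idempotent_off_diagonal[OF peirce_swap jordan D_1] .
  have "D f + D f = D f + u*D f*u" by (simp add: D_f_twisted)
  also have "\<dots> = 0" by (subst (1 2) D_f) (simp add: u_def algebra_simps peirce_simps)
  finally show ?thesis by (rule two_torsion_free)
qed

end

locale jordan_peirce = peirce e f for e f :: "'a::ring_1" +
  fixes D :: "'a \<Rightarrow> 'a"
  assumes jordan: "jordan_triple_derivation D"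
    and two_torsion_free: "\<And>z::'a. z + z = 0 \<Longrightarrow> z = 0"
    and prime: "\<And>a b::'a. (\<And>r. a*r*b = 0) \<Longrightarrow> a = 0 \<or> b = 0"
    and e_nonzero: "e \<noteq> 0" and f_nonzero: "f \<noteq> 0"
    and D_e: "D e = 0"
begin

lemmas triple = jordan_triple_derivationD[OF jordan]
lemmas D_zero = jordan_zero[OF jordan]

lemma D_f: "D f = 0"
  using jordan_zero_at_complement[OF jordan two_torsion_free D_e] .

lemma swap: "jordan_peirce f e D"
  by (rule jordan_peirce.intro[OF peirce_swap jordan_peirce_axioms.intro])
    (fact jordan two_torsion_free prime f_nonzero e_nonzero D_f)+

text \<open>With \<open>e\<^sub>1 = e\<close> and \<open>e\<^sub>2 = f\<close>, the indices \<open>ij\<close> in the names below refer to the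
  Peirce components \<open>e\<^sub>i * R * e\<^sub>j\<close>; \<open>swap\<close> exchanges the indices \<open>1\<close> and \<open>2\<close>.\<close>

lemma D_11: "D (e*y*e) = e*D y*e"
  using triple[of e y] by (simp add: D_e)

lemma D_11_in_11: "D (e*a*e) = e*D (e*a*e)*e"
  using D_11[of "e*a*e"] by (simp add: peirce_simps)

text \<open>The additivity defect \<open>t\<close> vanishes under compression by \<open>e\<close>, \<open>f\<close>, \<open>f + f*z*e\<close> and
  \<open>e + e*z*f\<close>, because one of the two summands does; primeness then kills its off-diagonal parts.\<close>
lemma D_add_11_12: "D (e*a*e + e*b*f) = D (e*a*e) + D (e*b*f)"
proof -
  define t where "t = D (e*a*e + e*b*f) - D (e*a*e) - D (e*b*f)"
  have compress: "p*t*p = 0" if "p*(e*a*e)*p = 0 \<or> p*(e*b*f)*p = 0" for p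
    unfolding t_def using that by (rule jordan_compress_defect_eq_0[OF jordan])
  have "e*t*e = 0" "f*t*f = 0" by (intro compress; simp add: peirce_simps)+
  have "f*z*e*t*f = 0" for z
  proof -
    have "(f + f*z*e)*t*(f + f*z*e) = 0" by (intro compress) (simp add: algebra_simps peirce_simps)
    then have "f*((f + f*z*e)*t*(f + f*z*e))*f = 0" by simp
    then show ?thesis using \<open>f*t*f = 0\<close> by (simp add: algebra_simps peirce_simps)
  qed
  then have "e*t*f = 0" using prime[of f "e*t*f"] f_nonzero by (simp add: mult.assoc)
  have "e*z*f*t*e = 0" for z
  proof -
    have "(e + e*z*f)*t*(e + e*z*f) = 0" by (intro compress) (simp add: algebra_simps peirce_simps)
    then have "e*((e + e*z*f)*t*(e + e*z*f))*e = 0" by simp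
    then show ?thesis using \<open>e*t*e = 0\<close> by (simp add: algebra_simps peirce_simps)
  qed
  then have "f*t*e = 0" using prime[of e "f*t*e"] e_nonzero by (simp add: mult.assoc)
  have "t = 0" by (rule peirce_eq_0I) fact+
  then show ?thesis unfolding t_def by (simp add: algebra_simps)
qed

lemma D_add_11_21: "D (e*a*e + f*c*e) = D (e*a*e) + D (f*c*e)"
proof -
  define t where "t = D (e*a*e + f*c*e) - D (e*a*e) - D (f*c*e)"
  have compress: "p*t*p = 0" if "p*(e*a*e)*p = 0 \<or> p*(f*c*e)*p = 0" for p
    unfolding t_def using that by (rule jordan_compress_defect_eq_0[OF jordan])
  have "e*t*e = 0" "f*t*f = 0" by (intro compress; simp add: peirce_simps)+
  have "f*t*e*z*f = 0" for z
  proof -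
    have "(f + e*z*f)*t*(f + e*z*f) = 0" by (intro compress) (simp add: algebra_simps peirce_simps)
    then have "f*((f + e*z*f)*t*(f + e*z*f))*f = 0" by simp
    then show ?thesis using \<open>f*t*f = 0\<close> by (simp add: algebra_simps peirce_simps)
  qed
  then have "f*t*e = 0" using prime[of "f*t*e" f] f_nonzero by (simp add: mult.assoc)
  have "e*t*f*z*e = 0" for z
  proof -
    have "(e + f*z*e)*t*(e + f*z*e) = 0" by (intro compress) (simp add: algebra_simps peirce_simps)
    then have "e*((e + f*z*e)*t*(e + f*z*e))*e = 0" by simp
    then show ?thesis using \<open>e*t*e = 0\<close> by (simp add: algebra_simps peirce_simps)
  qed
  then have "e*t*f = 0" using prime[of "e*t*f" e] e_nonzero by (simp add: mult.assoc)
  have "t = 0" by (rule peirce_eq_0I) fact+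
  then show ?thesis unfolding t_def by (simp add: algebra_simps)
qed

lemmas D_22 = jordan_peirce.D_11[OF swap]
lemmas D_22_in_22 = jordan_peirce.D_11_in_11[OF swap]
lemmas D_add_22_21 = jordan_peirce.D_add_11_12[OF swap]
lemmas D_add_22_12 = jordan_peirce.D_add_11_21[OF swap]

lemma D_e_plus_12: "D (e + e*y*f) = D (e*y*f)"
  using D_add_11_12[of e y] by (simp add: peirce_simps D_e)

lemma D_12_anticomm: "e*y*f*D (e*x*f)*e + e*x*f*D (e*y*f)*e = 0"
proof -
  \<comment> \<open>the triple identity for \<open>p = e + e*y*f\<close> and \<open>b = e*x*f\<close>, where \<open>p*b*p = 0\<close>\<close>
  define b where "b = e*x*f"
  define s where "s = e*y*f"
  define p where "p = e + s"
  have "p*b*p = 0" by (simp add: p_def b_def s_def peirce_simps algebra_simps)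
  then have "0 = e*(D p*b*p)*e + e*(p*D b*p)*e + e*(p*b*D p)*e"
    using arg_cong[OF triple[of p b], of "\<lambda>t. e*t*e"] by (simp add: D_zero algebra_simps)
  also have "e*(D p*b*p)*e = 0" by (simp add: p_def b_def s_def peirce_simps algebra_simps)
  also have "e*(p*D b*p)*e = e*D b*e + s*D b*e" by (simp add: p_def s_def peirce_simps algebra_simps)
  also have "e*D b*e = 0" using D_11[of b] by (simp add: b_def peirce_simps D_zero)
  also have "e*(p*b*D p)*e = b*D s*e"
    unfolding p_def s_def D_e_plus_12 by (simp add: b_def peirce_simps algebra_simps)
  finally show ?thesis by (simp add: b_def s_def add.commute)
qed

lemma D_one_plus_12_21: "f*D (1 + e*x*f)*e = f*D (e*x*f)*e"
proof -
  define w where "w = 1 + e*x*f"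
  have "w*e*w = e + e*x*f" by (simp add: w_def peirce_simps algebra_simps)
  then have "D (e*x*f) = D (w*e*w)" by (simp add: D_e_plus_12)
  also have "\<dots> = D w*e*w + w*e*D w" using triple[of w e] by (simp add: D_e)
  finally have "f*D (e*x*f)*e = f*(D w*e*w + w*e*D w)*e" by simp
  also have "\<dots> = f*D w*e" by (simp add: w_def peirce_simps algebra_simps)
  finally show ?thesis by (simp add: w_def)
qed

lemma D_12_22_21: "f*D (e*x*f*(f*z*f))*e = f*z*f*(f*D (e*x*f)*e)"
proof -
  define w where "w = 1 + e*x*f"
  define d where "d = f*z*f"
  have "w*d*w = f*z*f + e*(x*f*z)*f" by (simp add: w_def d_def peirce_simps algebra_simps)
  then have "D (w*d*w) = D (f*z*f) + D (e*(x*f*z)*f)" by (simp add: D_add_22_12)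
  moreover obtain k where "D (f*z*f) = f*k*f" using D_22_in_22 by blast
  ultimately have "f*D (w*d*w)*e = f*D (e*(x*f*z)*f)*e" by (simp add: peirce_simps algebra_simps)
  moreover have "f*D (w*d*w)*e = f*(D w*d*w)*e + f*(w*D d*w)*e + f*(w*d*D w)*e"
    unfolding triple by (simp add: algebra_simps)
  moreover have "f*(D w*d*w)*e = 0" by (simp add: w_def d_def peirce_simps algebra_simps)
  moreover have "f*(w*D d*w)*e = 0" unfolding d_def D_22 by (simp add: w_def peirce_simps algebra_simps)
  moreover have "f*(w*d*D w)*e = d*(f*D w*e)" by (simp add: w_def d_def peirce_simps algebra_simps)
  moreover have "f*D w*e = f*D (e*x*f)*e" unfolding w_def by (rule D_one_plus_12_21)
  ultimately show ?thesis by (simp add: d_def peirce_simps)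
qed

lemma D_12_21_component: "f*D (e*x*f)*e = 0"
proof -
  \<comment> \<open>\<open>D_12_anticomm\<close> with \<open>y = x*f*z\<close> gives \<open>2 * (e*x*f)*(f*z*f)*(f*D (e*x*f)*e) = 0\<close>\<close>
  have "e*x*f*(f*z*f)*(f*D (e*x*f)*e) = 0" for z
  proof -
    have "e*(x*f*z)*f*D (e*x*f)*e + e*x*f*D (e*(x*f*z)*f)*e = 0" by (rule D_12_anticomm)
    moreover have "e*x*f*D (e*(x*f*z)*f)*e = e*x*f*(f*D (e*x*f*(f*z*f))*e)" by (simp add: peirce_simps)
    ultimately have "e*x*f*(f*z*f)*(f*D (e*x*f)*e) + e*x*f*(f*z*f)*(f*D (e*x*f)*e) = 0"
      unfolding D_12_22_21 by (simp add: peirce_simps)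
    then show ?thesis by (rule two_torsion_free)
  qed
  then have "e*x*f = 0 \<or> f*D (e*x*f)*e = 0"
    using prime[of "e*x*f" "f*D (e*x*f)*e"] by (simp add: peirce_simps)
  then show ?thesis by (auto simp: D_zero)
qed

lemma D_12_in_12: "D (e*x*f) = e*D (e*x*f)*f"
proof -
  define t where "t = D (e*x*f) - e*D (e*x*f)*f"
  have "t = 0"
  proof (rule peirce_eq_0I)
    show "e*t*e = 0" unfolding t_def using D_11[of "e*x*f"] by (simp add: peirce_simps algebra_simps D_zero)
    show "f*t*f = 0" unfolding t_def using D_22[of "e*x*f"] by (simp add: peirce_simps algebra_simps D_zero)
    show "e*t*f = 0" unfolding t_def by (simp add: peirce_simps algebra_simps)
    show "f*t*e = 0" unfolding t_def using D_12_21_component[of x] by (simp add: peirce_simps algebra_simps)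
  qed
  then show ?thesis unfolding t_def by simp
qed

lemma D_one_plus_12: "D (1 + e*x*f) = D (e*x*f)"
proof -
  define w where "w = 1 + e*x*f"
  have "e*w*e = e" "f*w*f = f" by (simp_all add: w_def peirce_simps algebra_simps)
  then have "e*D w*e = 0" "f*D w*f = 0" using D_11[of w] D_22[of w] by (simp_all add: D_e D_f)
  moreover have "f*D w*e = 0" unfolding w_def D_one_plus_12_21 by (rule D_12_21_component)
  moreover have "D w = e*D w*e + e*D w*f + f*D w*e + f*D w*f" by (rule peirce_decomp)
  ultimately have D_w: "D w = e*D w*f" by simp
  have "w*e*w = e + e*x*f" by (simp add: w_def peirce_simps algebra_simps)
  then have "D (e*x*f) = D (w*e*w)" by (simp add: D_e_plus_12)
  also have "\<dots> = D w*e*w + w*e*D w" using triple[of w e] by (simp add: D_e)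
  also have "\<dots> = D w" by (subst (1 2 3) D_w) (simp add: w_def peirce_simps algebra_simps)
  finally show ?thesis by (simp add: w_def)
qed

lemma D_add_12: "D (e*a*f + e*b*f) = D (e*a*f) + D (e*b*f)"
proof -
  define w where "w = 1 + e*a*f"
  obtain c where c: "D w = e*c*f" unfolding w_def D_one_plus_12 using D_12_in_12 by blast
  obtain c' where c': "D (e*b*f) = e*c'*f" using D_12_in_12 by blast
  have "w*(e + e*b*f)*w = e + e*(a + b)*f" by (simp add: w_def peirce_simps algebra_simps)
  then have "D (e*(a + b)*f) = D (w*(e + e*b*f)*w)" by (simp add: D_e_plus_12)
  also have "\<dots> = D w*(e + e*b*f)*w + w*D (e + e*b*f)*w + w*(e + e*b*f)*D w"
    by (rule triple)
  also have "\<dots> = e*c*f + e*c'*f" unfolding D_e_plus_12 c c' by (simp add: w_def peirce_simps algebra_simps)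
  finally show ?thesis using c c' unfolding w_def D_one_plus_12 by (simp add: algebra_simps)
qed

lemma D_mult_11_12: "D (e*a*e*(e*x*f)) = D (e*a*e)*(e*x*f) + e*a*e*D (e*x*f)"
proof -
  define w where "w = 1 + e*x*f"
  obtain c where c: "D w = e*c*f" unfolding w_def D_one_plus_12 using D_12_in_12 by blast
  obtain k where k: "D (e*a*e) = e*k*e" using D_11_in_11 by blast
  have "w*(e*a*e)*w = e*a*e + e*(a*e*x)*f" by (simp add: w_def peirce_simps algebra_simps)
  then have "D (e*a*e) + D (e*(a*e*x)*f) = D (w*(e*a*e)*w)" by (simp add: D_add_11_12)
  also have "\<dots> = D w*(e*a*e)*w + w*D (e*a*e)*w + w*(e*a*e)*D w" by (rule triple)
  also have "\<dots> = e*k*e + e*k*e*(e*x*f) + e*a*e*(e*c*f)"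
    unfolding c k by (simp add: w_def peirce_simps algebra_simps)
  finally show ?thesis using c k unfolding w_def D_one_plus_12 by (simp add: peirce_simps algebra_simps)
qed

lemma D_mult_12_22: "D (e*x*f*(f*z*f)) = D (e*x*f)*(f*z*f) + e*x*f*D (f*z*f)"
proof -
  define w where "w = 1 + e*x*f"
  obtain c where c: "D w = e*c*f" unfolding w_def D_one_plus_12 using D_12_in_12 by blast
  obtain k where k: "D (f*z*f) = f*k*f" using D_22_in_22 by blast
  have "w*(f*z*f)*w = f*z*f + e*(x*f*z)*f" by (simp add: w_def peirce_simps algebra_simps)
  then have "D (f*z*f) + D (e*(x*f*z)*f) = D (w*(f*z*f)*w)" by (simp add: D_add_22_12)
  also have "\<dots> = D w*(f*z*f)*w + w*D (f*z*f)*w + w*(f*z*f)*D w" by (rule triple)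
  also have "\<dots> = f*k*f + e*c*f*(f*z*f) + e*x*f*(f*k*f)"
    unfolding c k by (simp add: w_def peirce_simps algebra_simps)
  finally show ?thesis using c k unfolding w_def D_one_plus_12 by (simp add: peirce_simps algebra_simps)
qed

lemma corner_11_eq_0I:
  assumes t: "t = e*t*e" and "\<And>x. t*(e*x*f) = 0"
  shows "t = 0"
proof -
  have "t*r*f = 0" for r
  proof -
    have "t*r*f = t*(e*r*f)" by (subst (1 2) t) (simp add: peirce_simps)
    then show ?thesis using assms(2) by simp
  qed
  then show ?thesis using prime[of t f] f_nonzero by blast
qed

lemma D_add_11: "D (e*a*e + e*b*e) = D (e*a*e) + D (e*b*e)"
proof -
  define t where "t = D (e*a*e + e*b*e) - D (e*a*e) - D (e*b*e)"
  have sum: "e*a*e + e*b*e = e*(a + b)*e" by (simp add: algebra_simps)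
  have "t = 0"
  proof (rule corner_11_eq_0I)
    obtain k k1 k2 where "D (e*(a + b)*e) = e*k*e" "D (e*a*e) = e*k1*e" "D (e*b*e) = e*k2*e"
      using D_11_in_11 by meson
    then show "t = e*t*e" unfolding t_def sum by (simp add: algebra_simps peirce_simps)
    show "t*(e*x*f) = 0" for x
    proof -
      have "D (e*(a + b)*e)*(e*x*f) + e*(a + b)*e*D (e*x*f) = D (e*(a*e*x)*f + e*(b*e*x)*f)"
        unfolding D_mult_11_12[symmetric] by (simp add: peirce_simps algebra_simps)
      also have "\<dots> = D (e*a*e)*(e*x*f) + e*a*e*D (e*x*f) + (D (e*b*e)*(e*x*f) + e*b*e*D (e*x*f))"
        unfolding D_add_12 using D_mult_11_12[of a x] D_mult_11_12[of b x] by (simp add: peirce_simps)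
      finally show ?thesis unfolding t_def sum by (simp add: algebra_simps)
    qed
  qed
  then show ?thesis unfolding t_def by (simp add: algebra_simps)
qed

lemmas D_add_22 = jordan_peirce.D_add_11[OF swap]
lemmas D_add_21 = jordan_peirce.D_add_12[OF swap]

lemma D_left_12_component: "e*(D x - D (e*x) - D (f*x))*f = 0"
proof -
  define t where "t = D x - D (e*x) - D (f*x)"
  have x: "e*x + f*x = x" by (simp flip: distrib_right add: complement)
  have compress: "p*t*p = D (p*x*p) - D (p*(e*x)*p) - D (p*(f*x)*p)" for p
    using jordan_compress_defect[OF jordan, of p "e*x" "f*x"] unfolding x t_def .
  have "f*(D (e*x + f*x) - D (e*x) - D (f*x))*f = 0"
    by (rule jordan_compress_defect_eq_0[OF jordan]) (simp add: peirce_simps)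
  then have "f*t*f = 0" unfolding t_def x .
  have "f*z*e*t*f = 0" for z
  proof -
    define p where "p = f + f*z*e"
    have compressions: "p*x*p = f*(x + z*e*x)*f + f*(x*f*z + z*e*x*f*z)*e"
      "p*(e*x)*p = f*(z*e*x)*f + f*(z*e*x*f*z)*e" "p*(f*x)*p = f*x*f + f*(x*f*z)*e"
      by (simp_all add: p_def peirce_simps algebra_simps)
    have split: "f*(x + z*e*x)*f = f*x*f + f*(z*e*x)*f"
      "f*(x*f*z + z*e*x*f*z)*e = f*(x*f*z)*e + f*(z*e*x*f*z)*e"
      by (simp_all add: algebra_simps)
    have "p*t*p = 0"
      unfolding compress compressions D_add_22_21 unfolding split D_add_22 D_add_21 by simp
    then have "f*(p*t*p)*f = 0" by simp
    then show ?thesis using \<open>f*t*f = 0\<close> by (simp add: p_def peirce_simps algebra_simps)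
  qed
  then have "e*t*f = 0" using prime[of f "e*t*f"] f_nonzero by (simp add: mult.assoc)
  then show ?thesis unfolding t_def .
qed

lemma D_left_sum: "D x = D (e*x) + D (f*x)"
proof -
  define t where "t = D x - D (e*x) - D (f*x)"
  have x: "e*x + f*x = x" by (simp flip: distrib_right add: complement)
  have "e*(D (e*x + f*x) - D (e*x) - D (f*x))*e = 0" "f*(D (e*x + f*x) - D (e*x) - D (f*x))*f = 0"
    by (rule jordan_compress_defect_eq_0[OF jordan], simp add: peirce_simps)+
  then have "e*t*e = 0" "f*t*f = 0" unfolding t_def x .
  moreover have "e*t*f = 0" unfolding t_def by (rule D_left_12_component)
  moreover have "f*t*e = 0"
    using jordan_peirce.D_left_12_component[OF swap, of x] unfolding t_def by (simp add: algebra_simps)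
  ultimately have "t = 0" using peirce_eq_0I by blast
  then show ?thesis unfolding t_def by (simp add: algebra_simps)
qed

lemma D_peirce_sum: "D x = D (e*x*e) + D (e*x*f) + D (f*x*e) + D (f*x*f)"
proof -
  have ex: "e*x*e + e*x*f = e*x" and fx: "f*x*f + f*x*e = f*x"
    by (simp_all flip: distrib_left add: complement add.commute)
  have "D (e*x) = D (e*x*e) + D (e*x*f)" using D_add_11_12[of x x] unfolding ex .
  moreover have "D (f*x) = D (f*x*f) + D (f*x*e)" using D_add_22_21[of x x] unfolding fx .
  ultimately show ?thesis using D_left_sum[of x] by (simp add: algebra_simps)
qed

lemma D_add: "D (x + y) = D x + D y"
proof -
  have "D (x + y) = D (e*(x + y)*e) + D (e*(x + y)*f) + D (f*(x + y)*e) + D (f*(x + y)*f)"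
    by (rule D_peirce_sum)
  also have "\<dots> = D (e*x*e + e*y*e) + D (e*x*f + e*y*f) + D (f*x*e + f*y*e) + D (f*x*f + f*y*f)"
    by (simp add: algebra_simps)
  also have "\<dots> = (D (e*x*e) + D (e*x*f) + D (f*x*e) + D (f*x*f))
      + (D (e*y*e) + D (e*y*f) + D (f*y*e) + D (f*y*f))"
    unfolding D_add_11 D_add_12 D_add_21 D_add_22 by (simp add: algebra_simps)
  also have "\<dots> = D x + D y" using D_peirce_sum[of x] D_peirce_sum[of y] by simp
  finally show ?thesis .
qed

lemma D_mult_11_11: "D (e*a*e*(e*b*e)) = D (e*a*e)*(e*b*e) + e*a*e*D (e*b*e)"
proof -
  define t where "t = D (e*a*e*(e*b*e)) - D (e*a*e)*(e*b*e) - e*a*e*D (e*b*e)"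
  have prod: "e*a*e*(e*b*e) = e*(a*e*b)*e" by (simp add: peirce_simps)
  have "t = 0"
  proof (rule corner_11_eq_0I)
    obtain k k1 k2 where "D (e*(a*e*b)*e) = e*k*e" "D (e*a*e) = e*k1*e" "D (e*b*e) = e*k2*e"
      using D_11_in_11 by meson
    then show "t = e*t*e" unfolding t_def prod by (simp add: algebra_simps peirce_simps)
    show "t*(e*x*f) = 0" for x
    proof -
      have "D (e*(a*e*b)*e*(e*x*f)) = D (e*(a*e*b)*e)*(e*x*f) + e*(a*e*b)*e*D (e*x*f)"
        "D (e*a*e*(e*(b*e*x)*f)) = D (e*a*e)*(e*(b*e*x)*f) + e*a*e*D (e*(b*e*x)*f)"
        "D (e*b*e*(e*x*f)) = D (e*b*e)*(e*x*f) + e*b*e*D (e*x*f)"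
        by (rule D_mult_11_12)+
      moreover have "e*(a*e*b)*e*(e*x*f) = e*a*e*(e*(b*e*x)*f)" "e*(b*e*x)*f = e*b*e*(e*x*f)"
        by (simp_all add: peirce_simps)
      ultimately have "D (e*(a*e*b)*e)*(e*x*f) = D (e*a*e)*(e*b*e)*(e*x*f) + e*a*e*D (e*b*e)*(e*x*f)"
        by (simp add: algebra_simps peirce_simps)
      then show ?thesis unfolding t_def prod by (simp add: algebra_simps)
    qed
  qed
  then show ?thesis unfolding t_def by (simp add: algebra_simps)
qed

lemma D_mult_12_21: "D (e*x*f*(f*z*e)) = D (e*x*f)*(f*z*e) + e*x*f*D (f*z*e)"
proof -
  define p where "p = e + e*x*f"
  define r where "r = f*z*e"
  obtain c where c: "D (e*x*f) = e*c*f" using D_12_in_12 by blast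
  obtain c' where c': "D r = f*c'*e" unfolding r_def using jordan_peirce.D_12_in_12[OF swap] by blast
  have "e*(p*r*p)*e = e*(x*f*z)*e" by (simp add: p_def r_def peirce_simps algebra_simps)
  then have "D (e*(x*f*z)*e) = D (e*(p*r*p)*e)" by simp
  also have "\<dots> = e*D (p*r*p)*e" by (rule D_11)
  also have "\<dots> = e*(D p*r*p + p*D r*p + p*r*D p)*e" unfolding triple ..
  also have "\<dots> = e*c*f*(f*z*e) + e*x*f*(f*c'*e)"
    unfolding p_def D_e_plus_12 c c' by (simp add: r_def peirce_simps algebra_simps)
  finally show ?thesis using c c' unfolding r_def by (simp add: peirce_simps)
qed

lemmas D_21_in_21 = jordan_peirce.D_12_in_12[OF swap]

lemma D_mult_11: "D (e*a*e*y) = D (e*a*e)*y + e*a*e*D y"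
proof -
  have "e*a*e*y = e*a*e*(e*y*e + e*y*f + f*y*e + f*y*f)" by (simp flip: peirce_decomp)
  then have split: "e*a*e*y = e*(a*e*y*e)*e + e*(a*e*y)*f" by (simp add: peirce_simps algebra_simps)
  have "D (e*a*e*y) = D (e*(a*e*y*e)*e) + D (e*(a*e*y)*f)" unfolding split by (rule D_add_11_12)
  also have "\<dots> = D (e*a*e*(e*y*e)) + D (e*a*e*(e*y*f))" by (simp add: peirce_simps)
  also have "\<dots> = D (e*a*e)*(e*y*e + e*y*f + f*y*e + f*y*f)
      + e*a*e*(D (e*y*e) + D (e*y*f) + D (f*y*e) + D (f*y*f))"
  proof -
    obtain k k1 k2 k3 k4 where "D (e*a*e) = e*k*e" "D (e*y*e) = e*k1*e" "D (e*y*f) = e*k2*f"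
      "D (f*y*e) = f*k3*e" "D (f*y*f) = f*k4*f"
      using D_11_in_11 D_12_in_12 D_21_in_21 D_22_in_22 by meson
    then show ?thesis unfolding D_mult_11_11 D_mult_11_12 by (simp add: peirce_simps algebra_simps)
  qed
  also have "\<dots> = D (e*a*e)*y + e*a*e*D y"
    using peirce_decomp[of y, symmetric] D_peirce_sum[of y, symmetric] by simp
  finally show ?thesis .
qed

lemma D_mult_12: "D (e*x*f*y) = D (e*x*f)*y + e*x*f*D y"
proof -
  have "e*x*f*y = e*x*f*(e*y*e + e*y*f + f*y*e + f*y*f)" by (simp flip: peirce_decomp)
  then have split: "e*x*f*y = e*(x*f*y*e)*e + e*(x*f*y)*f" by (simp add: peirce_simps algebra_simps)
  have "D (e*x*f*y) = D (e*(x*f*y*e)*e) + D (e*(x*f*y)*f)" unfolding split by (rule D_add_11_12)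
  also have "\<dots> = D (e*x*f*(f*y*e)) + D (e*x*f*(f*y*f))" by (simp add: peirce_simps)
  also have "\<dots> = D (e*x*f)*(e*y*e + e*y*f + f*y*e + f*y*f)
      + e*x*f*(D (e*y*e) + D (e*y*f) + D (f*y*e) + D (f*y*f))"
  proof -
    obtain k k1 k2 k3 k4 where "D (e*x*f) = e*k*f" "D (e*y*e) = e*k1*e" "D (e*y*f) = e*k2*f"
      "D (f*y*e) = f*k3*e" "D (f*y*f) = f*k4*f"
      using D_11_in_11 D_12_in_12 D_21_in_21 D_22_in_22 by meson
    then show ?thesis unfolding D_mult_12_21 D_mult_12_22 by (simp add: peirce_simps algebra_simps)
  qed
  also have "\<dots> = D (e*x*f)*y + e*x*f*D y"
    using peirce_decomp[of y, symmetric] D_peirce_sum[of y, symmetric] by simp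
  finally show ?thesis .
qed

lemma D_mult: "D (x*y) = D x*y + x*D y"
proof -
  have "x*y = (e*x*e + e*x*f + f*x*e + f*x*f)*y" by (simp flip: peirce_decomp)
  then have "x*y = e*x*e*y + e*x*f*y + f*x*e*y + f*x*f*y" by (simp add: algebra_simps)
  then have "D (x*y) = D (e*x*e*y) + D (e*x*f*y) + D (f*x*e*y) + D (f*x*f*y)" by (simp add: D_add)
  also have "\<dots> = (D (e*x*e) + D (e*x*f) + D (f*x*e) + D (f*x*f))*y
      + (e*x*e + e*x*f + f*x*e + f*x*f)*D y"
    unfolding D_mult_11 D_mult_12 jordan_peirce.D_mult_11[OF swap] jordan_peirce.D_mult_12[OF swap]
    by (simp add: algebra_simps)
  also have "\<dots> = D x*y + x*D y"
    using peirce_decomp[of x, symmetric] D_peirce_sum[of x, symmetric] by simp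
  finally show ?thesis .
qed

lemma derivation: "derivation D"
  unfolding derivation_def by (simp add: D_add D_mult)

end

theorem jordan_triple_derivation_is_derivation:
  fixes D :: "'a::ring_1 \<Rightarrow> 'a" and e :: 'a
  assumes jordan: "jordan_triple_derivation D"
    and two_torsion_free: "\<And>z::'a. z + z = 0 \<Longrightarrow> z = 0"
    and prime: "prime_algebra TYPE('a)"
    and idem: "nontrivial_idempotent e"
  shows "derivation D"
proof -
  define f where "f = 1 - e"
  interpret peirce e f
    using idem by unfold_locales (simp_all add: nontrivial_idempotent_def f_def)
  have D_e: "D e = e*D e*f + f*D e*e"
    using jordan_idempotent_off_diagonal[OF jordan jordan_one[OF jordan two_torsion_free]] .
  define c where "c = e*D e*f - f*D e*e"
  define E where "E x = D x + c*x - x*c" for x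
  interpret jordan_peirce e f E
  proof
    show "jordan_triple_derivation E"
      unfolding E_def by (rule jordan_triple_derivation_add_inner[OF jordan])
    show "z + z = 0 \<Longrightarrow> z = 0" for z :: 'a by (rule two_torsion_free)
    show "(\<And>r. a*r*b = 0) \<Longrightarrow> a = 0 \<or> b = 0" for a b :: 'a
      using prime unfolding prime_algebra_def by blast
    show "e \<noteq> 0" "f \<noteq> 0" using idem by (auto simp: nontrivial_idempotent_def f_def)
    show "E e = 0"
      unfolding E_def c_def by (subst (1) D_e) (simp add: algebra_simps peirce_simps)
  qed
  have "D = (\<lambda>x. E x - c*x + x*c)" by (simp add: E_def fun_eq_iff)
  then show ?thesis
    using derivation unfolding derivation_def by (simp add: algebra_simps)
qed

lemma two_torsion_free_real_vector: "(z::'a::real_vector) + z = 0 \<Longrightarrow> z = 0"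
  by (metis scaleR_2 scaleR_eq_0_iff zero_neq_numeral)

lemma norm_doubling_defect_le:
  fixes h :: "'a::real_normed_algebra_1 \<Rightarrow> 'a" and m :: int
  assumes odd: "\<And>x. h (- x) = - h x" and "m \<noteq> 0"
    and le: "norm (h (0 + of_int m * y) + h (0 - of_int m * y) - 2 * h 0
               + 2 * (of_int m)^2 * h y - (of_int m)^2 * h (2 * y)) \<le> c"
  shows "norm (h (2 *\<^sub>R y) - 2 *\<^sub>R h y) \<le> c"
proof -
  have "h 0 + h 0 = 0" using odd[of 0] by (metis add.right_inverse minus_zero)
  then have "h 0 = 0" by (rule two_torsion_free_real_vector)
  moreover have commute: "(2::'a) * (of_int m)^2 = (of_int m)^2 * 2"
    by (metis mult_of_int_commute of_int_power)
  ultimately have "h (0 + of_int m * y) + h (0 - of_int m * y) - 2 * h 0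
      + 2 * (of_int m)^2 * h y - (of_int m)^2 * h (2 * y)
      = real_of_int (m^2) *\<^sub>R (2 *\<^sub>R h y - h (2 *\<^sub>R y))"
    using odd[of "of_int m * y"] by (simp add: scaleR_conv_of_real right_diff_distrib commute mult.assoc)
  then have scaled: "real_of_int (m^2) * norm (h (2 *\<^sub>R y) - 2 *\<^sub>R h y) \<le> c"
    using le by (simp add: norm_minus_commute)
  have "0 < m^2" using \<open>m \<noteq> 0\<close> by simp
  then have "1 \<le> real_of_int (m^2)" by linarith
  then show ?thesis
    using scaled by (smt (verit) mult_le_cancel_right1 norm_ge_zero)
qed

definition hyers_seq :: "('a::real_vector \<Rightarrow> 'b::real_vector) \<Rightarrow> nat \<Rightarrow> 'a \<Rightarrow> 'b" where
  "hyers_seq h n x = (1 / 2^n) *\<^sub>R h ((2::real)^n *\<^sub>R x)"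

lemma convergent_if_summable_diff:
  fixes X :: "nat \<Rightarrow> 'a::banach"
  assumes "summable (\<lambda>k. X (Suc k) - X k)"
  shows "convergent X"
proof -
  have "(\<lambda>n. X 0 + (\<Sum>k<n. X (Suc k) - X k)) \<longlonglongrightarrow> X 0 + suminf (\<lambda>k. X (Suc k) - X k)"
    using summable_LIMSEQ[OF assms] by (intro tendsto_add tendsto_const)
  then show ?thesis unfolding sum_lessThan_telescope convergent_def by auto
qed

lemma hyers_seq_convergent:
  fixes h :: "'a::real_vector \<Rightarrow> 'b::banach"
  assumes doubling: "\<And>y. norm (h (2 *\<^sub>R y) - 2 *\<^sub>R h y) \<le> \<epsilon> y"
    and summable: "summable (\<lambda>k. \<epsilon> ((2::real)^k *\<^sub>R x) / 2^k)"
  shows "convergent (\<lambda>n. hyers_seq h n x)"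
proof (rule convergent_if_summable_diff, rule summable_comparison_test')
  show "summable (\<lambda>k. \<epsilon> ((2::real)^k *\<^sub>R x) / 2^k / 2)"
    using summable by (rule summable_divide)
  show "norm (hyers_seq h (Suc k) x - hyers_seq h k x) \<le> \<epsilon> ((2::real)^k *\<^sub>R x) / 2^k / 2" for k
  proof -
    have "hyers_seq h (Suc k) x - hyers_seq h k x
        = (1 / 2^Suc k) *\<^sub>R (h (2 *\<^sub>R (2^k *\<^sub>R x)) - 2 *\<^sub>R h ((2::real)^k *\<^sub>R x))"
      unfolding hyers_seq_def by (simp add: scaleR_right_diff_distrib)
    then show ?thesis
      using doubling[of "(2::real)^k *\<^sub>R x"] by (simp add: divide_right_mono mult.commute)
  qed
qed

definition jordan_defect :: "('a::ring \<Rightarrow> 'a) \<Rightarrow> 'a \<Rightarrow> 'a \<Rightarrow> 'a" where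
  "jordan_defect D x y = D (x*y*x) - D x*y*x - x*D y*x - x*y*D x"

lemma hyers_seq_jordan_defect_2:
  fixes h :: "'a::real_algebra \<Rightarrow> 'a"
  shows "hyers_seq h (2*k) (x*y*x) - hyers_seq h k x*y*x - x*h y*x - x*y*hyers_seq h k x
    = (1 / 2^(2*k)) *\<^sub>R jordan_defect h ((2::real)^k *\<^sub>R x) y"
proof -
  define c where "c = (2::real)^k"
  have "c \<noteq> 0" "(2::real)^(2*k) = c*c" by (simp_all add: c_def power_mult_distrib flip: power_add mult_2)
  then show ?thesis
    unfolding hyers_seq_def jordan_defect_def c_def[symmetric]
    by (simp add: scaleR_right_diff_distrib field_simps)
qed

lemma hyers_seq_jordan_defect_3:
  fixes h :: "'a::real_algebra \<Rightarrow> 'a"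
  shows "hyers_seq h (3*k) (x*y*x) - hyers_seq h k x*y*x - x*hyers_seq h k y*x - x*y*hyers_seq h k x
    = (1 / 2^(3*k)) *\<^sub>R jordan_defect h ((2::real)^k *\<^sub>R x) ((2::real)^k *\<^sub>R y)"
proof -
  define c where "c = (2::real)^k"
  have "c \<noteq> 0" "(2::real)^(3*k) = c*c*c" by (simp_all add: c_def numeral_3_eq_3 power_add)
  then show ?thesis
    unfolding hyers_seq_def jordan_defect_def c_def[symmetric]
    by (simp add: scaleR_right_diff_distrib field_simps)
qed

lemma LIMSEQ_eq_0_if_liminf_bound:
  fixes u :: "nat \<Rightarrow> 'a::real_normed_vector"
  assumes "u \<longlonglongrightarrow> l" and "\<And>k. norm (u k) \<le> c k" and "liminf (\<lambda>k. ereal (c k)) = 0"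
  shows "l = 0"
proof -
  have "ereal (norm l) = liminf (\<lambda>k. ereal (norm (u k)))"
    using assms(1) by (intro lim_imp_Liminf[symmetric] trivial_limit_sequentially tendsto_ereal tendsto_norm)
  also have "\<dots> \<le> liminf (\<lambda>k. ereal (c k))" by (intro Liminf_mono) (simp add: assms(2))
  finally show ?thesis using assms(3) by simp
qed

lemma jordan_triple_derivation_if_stable:
  fixes h L :: "'a::real_normed_algebra_1 \<Rightarrow> 'a"
  assumes defect: "\<And>x y. norm (jordan_defect h x y) \<le> \<psi> x y"
    and liminf_3: "\<And>x y. liminf (\<lambda>k. ereal (\<psi> ((2::real)^k *\<^sub>R x) ((2::real)^k *\<^sub>R y) / 2^(3*k))) = 0"
    and liminf_2: "\<And>x y. liminf (\<lambda>k. ereal (\<psi> ((2::real)^k *\<^sub>R x) y / 2^(2*k))) = 0"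
    and L: "\<And>x. (\<lambda>n. hyers_seq h n x) \<longlonglongrightarrow> L x"
  shows "jordan_triple_derivation h"
proof -
  have L_sub: "(\<lambda>k. hyers_seq h (c*k) x) \<longlonglongrightarrow> L x" if "c > 0" for c x
  proof -
    have "strict_mono (\<lambda>k::nat. c*k)" using that by (auto simp: strict_mono_def)
    from LIMSEQ_subseq_LIMSEQ[OF L this] show ?thesis by (simp add: o_def)
  qed
  have L_2: "L (x*y*x) - L x*y*x - x*h y*x - x*y*L x = 0" for x y
  proof (rule LIMSEQ_eq_0_if_liminf_bound[OF _ _ liminf_2])
    show "(\<lambda>k. hyers_seq h (2*k) (x*y*x) - hyers_seq h k x*y*x - x*h y*x - x*y*hyers_seq h k x)
        \<longlonglongrightarrow> L (x*y*x) - L x*y*x - x*h y*x - x*y*L x"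
      by (intro tendsto_intros L_sub L) simp
    show "norm (hyers_seq h (2*k) (x*y*x) - hyers_seq h k x*y*x - x*h y*x - x*y*hyers_seq h k x)
        \<le> \<psi> ((2::real)^k *\<^sub>R x) y / 2^(2*k)" for k
      unfolding hyers_seq_jordan_defect_2 using defect by (simp add: divide_right_mono)
  qed
  have L_3: "jordan_defect L x y = 0" for x y
    unfolding jordan_defect_def
  proof (rule LIMSEQ_eq_0_if_liminf_bound[OF _ _ liminf_3])
    show "(\<lambda>k. hyers_seq h (3*k) (x*y*x) - hyers_seq h k x*y*x - x*hyers_seq h k y*x - x*y*hyers_seq h k x)
        \<longlonglongrightarrow> L (x*y*x) - L x*y*x - x*L y*x - x*y*L x"
      by (intro tendsto_intros L_sub L) simp
    show "norm (hyers_seq h (3*k) (x*y*x) - hyers_seq h k x*y*x - x*hyers_seq h k y*x - x*y*hyers_seq h k x)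
        \<le> \<psi> ((2::real)^k *\<^sub>R x) ((2::real)^k *\<^sub>R y) / 2^(3*k)" for k
      unfolding hyers_seq_jordan_defect_3 using defect by (simp add: divide_right_mono)
  qed
  have "h = L"
  proof
    fix y
    have "h y - L y = jordan_defect L 1 y - (L (1*y*1) - L 1*y*1 - 1*h y*1 - 1*y*L 1)"
      by (simp add: jordan_defect_def)
    also have "\<dots> = 0" unfolding L_2 L_3 by simp
    finally show "h y = L y" by simp
  qed
  then show ?thesis
    using L_3 unfolding jordan_triple_derivation_def jordan_defect_def by (simp add: algebra_simps)
qed

theorem theorem3p1:
  fixes h :: "'a::{real_normed_algebra_1, banach} \<Rightarrow> 'a"
    and \<phi> \<psi> :: "'a \<Rightarrow> 'a \<Rightarrow> real"
    and m :: int
  assumes prime: "prime_algebra TYPE('a)"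
    and idem: "\<exists>e::'a. nontrivial_idempotent e"
    and odd_h: "\<And>x. h (- x) = - h x"
    and phi_nonneg: "\<And>x y. \<phi> x y \<ge> 0"
    and psi_nonneg: "\<And>x y. \<psi> x y \<ge> 0"
    and ineq1: "\<And>x y. norm (h (x * y * x) - h x * y * x - x * h y * x - x * y * h x) \<le> \<psi> x y"
    and ineq2: "\<And>x y. norm (h (x + of_int m * y) + h (x - of_int m * y) - 2 * h x
                  + 2 * (of_int m)^2 * h y - (of_int m)^2 * h (2 * y)) \<le> \<phi> x y"
    and m_nz: "m \<noteq> 0" and m_even: "even m"
    and Phi_fin: "\<And>x. summable (\<lambda>k. \<phi> 0 ((2::real)^k *\<^sub>R x) / 2^k)"
    and lim1: "\<And>x y. liminf (\<lambda>k. ereal (\<psi> ((2::real)^k *\<^sub>R x) ((2::real)^k *\<^sub>R y) / 2^(3*k))) = 0"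
    and lim2: "\<And>x y. liminf (\<lambda>k. ereal (\<psi> ((2::real)^k *\<^sub>R x) y / 2^(2*k))) = 0"
  shows "derivation h"
proof -
  have "norm (h (2 *\<^sub>R y) - 2 *\<^sub>R h y) \<le> \<phi> 0 y" for y
    using odd_h m_nz ineq2[of 0 y] by (rule norm_doubling_defect_le)
  then have "convergent (\<lambda>n. hyers_seq h n x)" for x
    using Phi_fin by (rule hyers_seq_convergent)
  then have "jordan_triple_derivation h"
    using ineq1[folded jordan_defect_def] lim1 lim2
    by (intro jordan_triple_derivation_if_stable[where L = "\<lambda>x. lim (\<lambda>n. hyers_seq h n x)"])
      (simp_all add: convergent_LIMSEQ_iff)
  moreover obtain e :: 'a where "nontrivial_idempotent e" using idem by blast
  ultimately show ?thesis
    by (metis jordan_triple_derivation_is_derivation two_torsion_free_real_vector prime)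
qed

end
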